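(* Let $0<\epsilon<\pi/2$. For the navigation model with parameter $\epsilon$, every configuration of $\mathscr{C}'$ is $1$-looping.
   Context: $d=2$; a marked point is $x=(\xi,u)\in\mathbb{R}^2\times[0,1]$. Navigation model with parameter $\epsilon$: for $x=(\xi,u)$ let $C(x)=\xi+\{(r\cos\beta,r\sin\beta):r>0,\ |\beta-2\pi u|<\epsilon\}$; for a locally finite configuration $\varphi\subset\mathbb{R}^2\times[0,1]$ and $x\in\varphi$, $h(\varphi,x)$ is the marked point of $\varphi$ whose location is the unique closest point to $\xi$ (Euclidean norm) among the locations of points of $\varphi$ lying in $C(x)$; $\mathscr{C}'$ is the set of configurations for which these closest points exist and are unique for every $x\in\varphi$. Graph edges $x\to h(\varphi,x)$; $\mathrm{For}(x,\varphi)=\{x,h(\varphi,x),h(\varphi,h(\varphi,x)),\dots\}$; $\mathrm{Back}(x,\varphi)=\{y\in\varphi:x\in\mathrm{For}(y,\varphi)\}$. $k$-looping: $\varphi\in\mathscr{C}'$ is $k$-looping if for every $x\in\varphi$ there is an open ball $A_x\subset(\mathbb{R}^2\times[0,1])^k$ such that for all $(x_1,\dots,x_k)\in A_x$ (with $\varphi\cup\{x_1,\dots,x_k\}\in\mathscr{C}'$): (i) $\mathrm{For}(x,\varphi\cup\{x_1,\dots,x_k\})\subset\{x,x_1,\dots,x_k\}$; (ii) each $x_i$ lies in the connected component of $x$ in the graph on $\varphi\cup\{x_1,\dots,x_k\}$ and $\mathrm{For}(x_i,\varphi\cup\{x_1,\dots,x_k\})\subset\{x,x_1,\dots,x_k\}$;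 (iii) every $y\in\varphi\setminus\{x\}$ with $h(\varphi\cup\{x_1,\dots,x_k\},y)\ne h(\varphi,y)$ satisfies $h(\varphi\cup\{x_1,\dots,x_k\},y)\in\mathrm{Back}(x,\varphi\cup\{x_1,\dots,x_k\})\cap\{x,x_1,\dots,x_k\}$. *)

theory Defs
  imports "HOL-Analysis.Analysis"
begin

type_synonym mpoint = "(real \<times> real) \<times> real"

definition mark_space :: "mpoint set" where
  "mark_space = UNIV \<times> {0..1}"

definition cone :: "real \<Rightarrow> mpoint \<Rightarrow> (real \<times> real) set" where
  "cone eps x = {fst x + (r * cos b, r * sin b) | r b. r > 0 \<and> \<bar>b - 2 * pi * snd x\<bar> < eps}"

definition locally_finite_conf :: "mpoint set \<Rightarrow> bool" where
  "locally_finite_conf phi \<longleftrightarrow> phi \<subseteq> mark_space \<and> (\<forall>B. bounded B \<longrightarrow> finite (phi \<inter> B))"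

definition is_closest :: "real \<Rightarrow> mpoint set \<Rightarrow> mpoint \<Rightarrow> mpoint \<Rightarrow> bool" where
  "is_closest eps phi x y \<longleftrightarrow> y \<in> phi \<and> fst y \<in> cone eps x \<and>
     (\<forall>z\<in>phi. fst z \<in> cone eps x \<longrightarrow> dist (fst x) (fst y) \<le> dist (fst x) (fst z))"

definition Cprime :: "real \<Rightarrow> mpoint set set" where
  "Cprime eps = {phi. locally_finite_conf phi \<and> (\<forall>x\<in>phi. \<exists>!y. is_closest eps phi x y)}"

definition nav :: "real \<Rightarrow> mpoint set \<Rightarrow> mpoint \<Rightarrow> mpoint" where
  "nav eps phi x = (THE y. is_closest eps phi x y)"

definition For :: "real \<Rightarrow> mpoint \<Rightarrow> mpoint set \<Rightarrow> mpoint set" where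
  "For eps x phi = {(nav eps phi ^^ n) x | n. True}"

definition Back :: "real \<Rightarrow> mpoint \<Rightarrow> mpoint set \<Rightarrow> mpoint set" where
  "Back eps x phi = {y \<in> phi. x \<in> For eps y phi}"

definition nav_edges :: "real \<Rightarrow> mpoint set \<Rightarrow> (mpoint \<times> mpoint) set" where
  "nav_edges eps phi = {(y, nav eps phi y) | y. y \<in> phi}"

definition component :: "real \<Rightarrow> mpoint set \<Rightarrow> mpoint \<Rightarrow> mpoint set" where
  "component eps phi x = {y. (x, y) \<in> (nav_edges eps phi \<union> (nav_edges eps phi)\<inverse>)\<^sup>*}"

definition tuple_ball :: "nat \<Rightarrow> mpoint list \<Rightarrow> real \<Rightarrow> mpoint list set" where
  "tuple_ball k c r = {xs. length xs = k \<and>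
      sqrt (\<Sum>i<k. (dist (xs ! i) (c ! i))\<^sup>2) < r}"

definition k_looping :: "real \<Rightarrow> nat \<Rightarrow> mpoint set \<Rightarrow> bool" where
  "k_looping eps k phi \<longleftrightarrow> phi \<in> Cprime eps \<and>
    (\<forall>x\<in>phi. \<exists>c r. length c = k \<and> r > 0 \<and>
       tuple_ball k c r \<subseteq> {xs. set xs \<subseteq> mark_space} \<and>
       (\<forall>xs\<in>tuple_ball k c r. phi \<union> set xs \<in> Cprime eps \<longrightarrow>
          (let psi = phi \<union> set xs; S = insert x (set xs) in
             For eps x psi \<subseteq> S \<and>
             (\<forall>xi\<in>set xs. xi \<in> component eps psi x \<and> For eps xi psi \<subseteq> S) \<and>
             (\<forall>y\<in>phi - {x}. nav eps psi y \<noteq> nav eps phi y \<longrightarrow>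
                nav eps psi y \<in> Back eps x psi \<inter> S))))"

end

theory Submission
  imports Defs
begin

text \<open>For a point \<open>x\<close> of the configuration, place a new point \<open>x1\<close> inside the cone of \<open>x\<close>,
  closer to \<open>x\<close> than half the distance to every other location of the configuration, and give
  it the mark whose direction points back at \<open>x\<close>. Then \<open>x\<close> and \<open>x1\<close> navigate to each other,
  and any other point whose target changes must now point at \<open>x1\<close>, which lies in
  \<open>Back x\<close>. All requirements are strict inequalities, so they persist on a whole ball of
  choices for \<open>x1\<close>.\<close>

definition unit_dir :: "real \<Rightarrow> real \<times> real" where
  "unit_dir t = (cos t, sin t)"

lemma norm_unit_dir [simp]: "norm (unit_dir t) = 1"
  by (simp add: unit_dir_def norm_Pair)

lemma inner_unit_dir: "inner (unit_dir s) (unit_dir t) = cos (s - t)"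
  by (simp add: unit_dir_def cos_diff)

lemma continuous_on_unit_dir [continuous_intros]:
  fixes f :: "'a::t2_space \<Rightarrow> real"
  shows "continuous_on S f \<Longrightarrow> continuous_on S (\<lambda>x. unit_dir (f x))"
  unfolding unit_dir_def by (intro continuous_intros)

lemma unit_dir_surj:
  assumes "norm e = 1"
  obtains t where "e = unit_dir t"
proof -
  obtain p q where e: "e = (p, q)" by (cases e)
  have "p\<^sup>2 + q\<^sup>2 = 1"
    using assms by (simp add: e norm_Pair)
  then obtain t where "p = cos t" "q = sin t"
    by (rule sincos_total_2pi)
  with e show ?thesis
    using that unfolding unit_dir_def by blast
qed

lemma unit_dir_principal: obtains t' where "\<bar>t'\<bar> \<le> pi" "unit_dir t' = unit_dir t"
proof -
  obtain s where s: "0 \<le> s" "s < 2 * pi" "unit_dir s = unit_dir t"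
    using sincos_total_2pi[OF sin_cos_squared_add2[of t]] unfolding unit_dir_def by metis
  show ?thesis
  proof (cases "s \<le> pi")
    case True
    with s show ?thesis using that[of s] by simp
  next
    case False
    have "unit_dir (s - 2 * pi) = unit_dir t"
      using s(3) by (simp add: unit_dir_def cos_diff sin_diff)
    with s False show ?thesis using that[of "s - 2 * pi"] by simp
  qed
qed

lemma fst_notin_cone: "fst x \<notin> cone eps x"
proof
  assume "fst x \<in> cone eps x"
  then obtain r b where "r > 0" "fst x = fst x + (r * cos b, r * sin b)"
    unfolding cone_def by auto
  then have "cos b = 0" "sin b = 0" by (auto simp: zero_prod_def)
  then show False using sin_cos_squared_add[of b] by simp
qed

lemma cone_if_inner_gt:
  assumes "0 < eps" "eps \<le> pi"
    and gt: "inner w (unit_dir (2 * pi * snd x)) > norm w * cos eps"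
  shows "fst x + w \<in> cone eps x"
proof -
  define \<alpha> where "\<alpha> = 2 * pi * snd x"
  have "w \<noteq> 0" using gt by auto
  then have "norm (w /\<^sub>R norm w) = 1" by simp
  then obtain t where t: "w /\<^sub>R norm w = unit_dir t" by (rule unit_dir_surj)
  have w: "w = norm w *\<^sub>R unit_dir t"
    using \<open>w \<noteq> 0\<close> by (simp flip: t)
  obtain \<theta> where \<theta>: "\<bar>\<theta>\<bar> \<le> pi" "unit_dir \<theta> = unit_dir (t - \<alpha>)"
    by (rule unit_dir_principal)
  have "inner w (unit_dir \<alpha>) = norm w * cos \<theta>"
    using arg_cong[OF w, of "\<lambda>v. inner v (unit_dir \<alpha>)"] \<theta>(2)
    by (simp add: inner_unit_dir flip: unit_dir_def) (simp add: unit_dir_def)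
  then have "norm w * cos \<theta> > norm w * cos eps"
    using gt unfolding \<alpha>_def by simp
  then have "cos \<bar>\<theta>\<bar> > cos eps"
    using \<open>w \<noteq> 0\<close> by (simp add: abs_if)
  then have "\<bar>\<theta>\<bar> < eps"
    using assms(1,2) \<theta>(1) cos_monotone_0_pi_le[of eps "\<bar>\<theta>\<bar>"] by linarith
  moreover have "unit_dir (\<alpha> + \<theta>) = unit_dir t"
  proof -
    have "unit_dir (\<alpha> + \<theta>) = unit_dir (\<alpha> + (t - \<alpha>))"
      using \<theta>(2) unfolding unit_dir_def cos_add sin_add by simp
    then show ?thesis by simp
  qed
  then have "w = (norm w * cos (\<alpha> + \<theta>), norm w * sin (\<alpha> + \<theta>))"
    using w by (simp add: unit_dir_def)
  ultimately show ?thesis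
    using \<open>w \<noteq> 0\<close> unfolding cone_def \<alpha>_def by force
qed

lemma exists_opposite_mark:
  assumes "0 < eps" "eps \<le> pi" "u \<in> {0..1}"
  obtains u' where "0 < u'" "u' < 1" "cos (2 * pi * u' - 2 * pi * u) < - cos eps"
proof -
  have "cos eps < cos (eps / 2)"
    using assms by (intro cos_monotone_0_pi) auto
  show ?thesis
  proof (cases "u \<le> 1 / 2")
    case True
    \<comment> \<open>\<open>u' = u + 1/2\<close> may leave the open interval, so turn back by \<open>eps/2\<close>\<close>
    define u' where "u' = u + 1 / 2 - eps / (4 * pi)"
    have "eps / (4 * pi) \<le> 1 / 4" "0 < eps / (4 * pi)"
      using assms(1,2) by (simp_all add: field_simps)
    then have "0 < u'" "u' < 1"
      using assms(3) True unfolding u'_def by (simp_all, linarith+)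
    moreover have "2 * pi * u' - 2 * pi * u = pi - eps / 2"
      unfolding u'_def by (simp add: field_simps)
    ultimately show ?thesis
      using that[of u'] \<open>cos eps < cos (eps / 2)\<close> by simp
  next
    case False
    have "2 * pi * (u - 1 / 2) - 2 * pi * u = - pi"
      by (simp add: field_simps)
    moreover have "cos eps < 1"
      using \<open>cos eps < cos (eps / 2)\<close> cos_le_one[of "eps / 2"] by linarith
    ultimately show ?thesis
      using that[of "u - 1 / 2"] assms(3) False by auto
  qed
qed

text \<open>The centre is \<open>fst x\<close> moved by \<open>\<rho>/2\<close> against the direction of the mark \<open>u'\<close>; the
  conditions are strict inequalities between continuous functions, so they hold on a ball.\<close>
lemma looping_partner_ball:
  assumes "0 < eps" "eps \<le> pi" "snd x \<in> {0..1}" "\<rho> > 0"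
  obtains c r where "r > 0" "ball c r \<subseteq> mark_space"
    "\<And>x1. x1 \<in> ball c r \<Longrightarrow>
       fst x1 \<in> cone eps x \<and> fst x \<in> cone eps x1 \<and> dist (fst x) (fst x1) < \<rho>"
proof -
  define \<xi> where "\<xi> = fst x"
  define e where "e = unit_dir (2 * pi * snd x)"
  obtain u' where u': "0 < u'" "u' < 1" "cos (2 * pi * u' - 2 * pi * snd x) < - cos eps"
    using exists_opposite_mark[OF assms(1-3)] .
  define \<delta> where "\<delta> = \<rho> / 2"
  define c where "c = (\<xi> - \<delta> *\<^sub>R unit_dir (2 * pi * u'), u')"
  define U where "U = {y. 0 < snd y \<and> snd y < 1 \<and> dist \<xi> (fst y) < \<rho> \<and>
      norm (fst y - \<xi>) * cos eps < inner (fst y - \<xi>) e \<and>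
      norm (\<xi> - fst y) * cos eps < inner (\<xi> - fst y) (unit_dir (2 * pi * snd y))}"
  have "open U"
    unfolding U_def by (intro open_Collect_conj open_Collect_less continuous_intros)
  moreover have "c \<in> U"
  proof -
    have "\<delta> > 0" using assms(4) by (simp add: \<delta>_def)
    have "cos eps < 1"
      using assms(1,2) cos_monotone_0_pi[of 0 eps] by simp
    then have "\<delta> * cos eps < \<delta>"
      using \<open>\<delta> > 0\<close> by simp
    moreover have "\<delta> * cos eps < \<delta> * - inner (unit_dir (2 * pi * u')) e"
      using mult_strict_left_mono[OF u'(3) \<open>\<delta> > 0\<close>] by (simp add: e_def inner_unit_dir)
    moreover have "\<delta> < \<rho>"
      using assms(4) by (simp add: \<delta>_def)
    ultimately show ?thesis
      using \<open>\<delta> > 0\<close> unfolding U_def c_def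
      by (simp add: u'(1,2) dist_norm inner_unit_dir)
  qed
  ultimately obtain r where "r > 0" "ball c r \<subseteq> U"
    by (meson openE)
  moreover have "U \<subseteq> mark_space"
    unfolding U_def mark_space_def by (auto simp: mem_Times_iff)
  moreover have "fst y \<in> cone eps x \<and> fst x \<in> cone eps y \<and> dist (fst x) (fst y) < \<rho>"
    if "y \<in> U" for y
    using that cone_if_inner_gt[OF assms(1,2), of "fst y - \<xi>" x]
      cone_if_inner_gt[OF assms(1,2), of "\<xi> - fst y" y]
    unfolding U_def e_def \<xi>_def by auto
  ultimately show ?thesis
    using that by blast
qed

lemma locally_finite_conf_isolated:
  assumes "locally_finite_conf phi" "x \<in> phi"
  obtains \<rho> where "\<rho> > 0" "\<And>z. z \<in> phi \<Longrightarrow> fst z \<noteq> fst x \<Longrightarrow> \<rho> \<le> dist (fst x) (fst z)"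
proof -
  define B :: "mpoint set" where "B = cball (fst x) 1 \<times> {0..1}"
  have "finite (phi \<inter> B)"
    using assms(1) unfolding locally_finite_conf_def B_def by (simp add: bounded_Times)
  then obtain d where d: "d > 0" "\<forall>p\<in>fst ` (phi \<inter> B). p \<noteq> fst x \<longrightarrow> d \<le> dist (fst x) p"
    using finite_set_avoid[OF finite_imageI] by blast
  have "min d 1 \<le> dist (fst x) (fst z)" if "z \<in> phi" "fst z \<noteq> fst x" for z
  proof (cases "z \<in> B")
    case True
    with d that show ?thesis by force
  next
    case False
    have "snd z \<in> {0..1}"
      using assms(1) that(1) unfolding locally_finite_conf_def mark_space_def by (auto simp: mem_Times_iff)
    with False show ?thesis
      unfolding B_def by (auto simp: mem_Times_iff)
  qed
  with d(1) show ?thesis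
    using that[of "min d 1"] by simp
qed

lemma nav_eqI:
  assumes "psi \<in> Cprime eps" "y \<in> psi" "is_closest eps psi y w"
  shows "nav eps psi y = w"
  using assms the1_equality[of "is_closest eps psi y" w] unfolding Cprime_def nav_def by blast

lemma is_closest_nav:
  assumes "psi \<in> Cprime eps" "y \<in> psi"
  shows "is_closest eps psi y (nav eps psi y)"
  using assms theI'[of "is_closest eps psi y"] unfolding Cprime_def nav_def by blast

lemma nav_insert_changed:
  assumes "phi \<in> Cprime eps" "insert x1 phi \<in> Cprime eps" "y \<in> phi"
    and "nav eps (insert x1 phi) y \<noteq> nav eps phi y"
  shows "nav eps (insert x1 phi) y = x1"
proof (rule ccontr)
  assume "nav eps (insert x1 phi) y \<noteq> x1"
  moreover have "is_closest eps (insert x1 phi) y (nav eps (insert x1 phi) y)"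
    using is_closest_nav[OF assms(2)] assms(3) by blast
  ultimately have "is_closest eps phi y (nav eps (insert x1 phi) y)"
    unfolding is_closest_def by auto
  with assms(1,3,4) nav_eqI show False by metis
qed

lemma For_two_cycle:
  assumes "nav eps psi x = y" "nav eps psi y = x"
  shows "For eps x psi \<subseteq> {x, y}"
proof -
  have "(nav eps psi ^^ n) x \<in> {x, y}" for n
    by (induction n) (use assms in auto)
  then show ?thesis unfolding For_def by blast
qed

lemma nav_insert_partner:
  assumes psi: "insert x1 phi \<in> Cprime eps" and x: "x \<in> phi"
    and iso: "\<And>z. z \<in> phi \<Longrightarrow> fst z \<noteq> fst x \<Longrightarrow> \<rho> \<le> dist (fst x) (fst z)"
    and near: "dist (fst x) (fst x1) < \<rho> / 2"
    and cones: "fst x1 \<in> cone eps x" "fst x \<in> cone eps x1"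
  shows "nav eps (insert x1 phi) x = x1" "nav eps (insert x1 phi) x1 = x"
proof -
  have "dist (fst x) (fst x1) < dist (fst x) (fst z)" if "z \<in> phi" "fst z \<in> cone eps x" for z
  proof -
    have "fst z \<noteq> fst x"
      using fst_notin_cone[of x eps] that(2) by auto
    with iso[OF that(1)] near zero_le_dist[of "fst x" "fst x1"] show ?thesis by linarith
  qed
  then have "is_closest eps (insert x1 phi) x x1"
    using cones(1) unfolding is_closest_def by (auto intro: less_imp_le)
  then show "nav eps (insert x1 phi) x = x1"
    using nav_eqI[OF psi] x by blast
  have "dist (fst x1) (fst x) \<le> dist (fst x1) (fst z)" if "z \<in> phi" for z
  proof (cases "fst z = fst x")
    case False
    then show ?thesis
      using iso[OF that] near dist_triangle[of "fst x" "fst z" "fst x1"] by (simp add: dist_commute)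
  qed simp
  then have "is_closest eps (insert x1 phi) x1 x"
    using cones x fst_notin_cone[of x1 eps] unfolding is_closest_def by auto
  then show "nav eps (insert x1 phi) x1 = x"
    using nav_eqI[OF psi] by blast
qed

lemma tuple_ball_1: "tuple_ball 1 [c] r = (\<lambda>y. [y]) ` ball c r"
  unfolding tuple_ball_def by (auto simp: length_Suc_conv dist_commute)

lemma k_looping_1I:
  assumes phi: "phi \<in> Cprime eps"
    and partner: "\<And>x. x \<in> phi \<Longrightarrow> \<exists>c r. r > 0 \<and> ball c r \<subseteq> mark_space \<and>
      (\<forall>x1\<in>ball c r. insert x1 phi \<in> Cprime eps \<longrightarrow>
         nav eps (insert x1 phi) x = x1 \<and> nav eps (insert x1 phi) x1 = x)"
  shows "k_looping eps 1 phi"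
  unfolding k_looping_def
proof (intro conjI phi ballI)
  fix x assume "x \<in> phi"
  then obtain c r where r: "r > 0" "ball c r \<subseteq> mark_space"
    and cyc: "\<And>x1. x1 \<in> ball c r \<Longrightarrow> insert x1 phi \<in> Cprime eps \<Longrightarrow>
       nav eps (insert x1 phi) x = x1 \<and> nav eps (insert x1 phi) x1 = x"
    using partner by blast
  have "For eps x psi \<subseteq> {x, x1} \<and> x1 \<in> component eps psi x \<and> For eps x1 psi \<subseteq> {x, x1} \<and>
      (\<forall>y\<in>phi - {x}. nav eps psi y \<noteq> nav eps phi y \<longrightarrow> nav eps psi y \<in> Back eps x psi \<inter> {x, x1})"
    if x1: "x1 \<in> ball c r" and psi_eq: "psi = insert x1 phi" and psi: "psi \<in> Cprime eps" for x1 psi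
  proof -
    have nav: "nav eps psi x = x1" "nav eps psi x1 = x"
      using cyc[OF x1] psi unfolding psi_eq by auto
    then have "(x1, x) \<in> nav_edges eps psi"
      unfolding nav_edges_def psi_eq by force
    then have "x1 \<in> component eps psi x"
      unfolding component_def by blast
    moreover have "x1 \<in> Back eps x psi"
      using nav(2) unfolding Back_def For_def psi_eq by (force intro: exI[of _ 1])
    moreover have "nav eps psi y = x1" if "y \<in> phi" "nav eps psi y \<noteq> nav eps phi y" for y
      using nav_insert_changed[OF phi] psi that unfolding psi_eq by blast
    ultimately show ?thesis
      using For_two_cycle[OF nav] For_two_cycle[OF nav(2,1)] by auto
  qed
  with r show "\<exists>c r. length c = 1 \<and> r > 0 \<and> tuple_ball 1 c r \<subseteq> {xs. set xs \<subseteq> mark_space} \<and>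
       (\<forall>xs\<in>tuple_ball 1 c r. phi \<union> set xs \<in> Cprime eps \<longrightarrow>
          (let psi = phi \<union> set xs; S = insert x (set xs) in
             For eps x psi \<subseteq> S \<and>
             (\<forall>xi\<in>set xs. xi \<in> component eps psi x \<and> For eps xi psi \<subseteq> S) \<and>
             (\<forall>y\<in>phi - {x}. nav eps psi y \<noteq> nav eps phi y \<longrightarrow>
                nav eps psi y \<in> Back eps x psi \<inter> S)))"
    by (intro exI[of _ "[c]"] exI[of _ r], unfold tuple_ball_1 Let_def) auto
qed

theorem proposition5p3:
  fixes eps :: real
  assumes "0 < eps" and "eps < pi / 2"
  shows "\<forall>phi \<in> Cprime eps. k_looping eps 1 phi"
proof
  fix phi assume phi: "phi \<in> Cprime eps"
  then have lf: "locally_finite_conf phi"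
    unfolding Cprime_def by blast
  show "k_looping eps 1 phi"
  proof (rule k_looping_1I[OF phi])
    fix x assume x: "x \<in> phi"
    obtain \<rho> where \<rho>: "\<rho> > 0" "\<And>z. z \<in> phi \<Longrightarrow> fst z \<noteq> fst x \<Longrightarrow> \<rho> \<le> dist (fst x) (fst z)"
      using locally_finite_conf_isolated[OF lf x] by blast
    have "snd x \<in> {0..1}"
      using lf x unfolding locally_finite_conf_def mark_space_def by (auto simp: mem_Times_iff)
    moreover have "eps \<le> pi" "\<rho> / 2 > 0"
      using assms \<rho>(1) by simp_all
    ultimately obtain c r where "r > 0" "ball c r \<subseteq> mark_space"
      and "\<And>x1. x1 \<in> ball c r \<Longrightarrow>
        fst x1 \<in> cone eps x \<and> fst x \<in> cone eps x1 \<and> dist (fst x) (fst x1) < \<rho> / 2"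
      using looping_partner_ball[OF assms(1)] by metis
    then show "\<exists>c r. r > 0 \<and> ball c r \<subseteq> mark_space \<and>
      (\<forall>x1\<in>ball c r. insert x1 phi \<in> Cprime eps \<longrightarrow>
         nav eps (insert x1 phi) x = x1 \<and> nav eps (insert x1 phi) x1 = x)"
      using nav_insert_partner[OF _ x \<rho>(2)] by blast
  qed
qed

end
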